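(* Let $S$ be an additively reduced and additively Furstenberg semidomain and let $G$ be a torsion-free abelian group, totally ordered compatibly with addition, in which every subset that is bounded below is well-ordered. The following statements are equivalent. (1) $\mathscr{A}_+(S)=S^\times$. (2) Every $f\in S[\![G]\!]$ with $|\operatorname{supp}(f)|>1$ can be expressed as the sum of at most three irreducible elements of $S[\![G]\!]$. (3) There exists $n\in\mathbb{N}$ with $n>2$ such that every $f\in S[\![G]\!]$ with $|\operatorname{supp}(f)|>1$ can be expressed as the sum of at most $n$ irreducible elements of $S[\![G]\!]$.
   Context: A semidomain is a subsemiring (containing $0$ and $1$) of an integral domain; all semirings are commutative. For a semidomain $S$, $S^\times$ denotes the group of units of the multiplicative monoid $S\setminus\{0\}$. $S$ is additively reduced if $0$ is the only invertible element of $(S,+)$. An additive atom of $S$ is a nonzero $a\in S$ such that $a=b+c$ with $b,c\in S$ implies $b=0$ or $c=0$; $\mathscr{A}_+(S)$ is the set of additive atoms. $S$ is additively Furstenberg if every nonzero $s\in S$ can be written $s=a+t$ with $a\in\mathscr{A}_+(S)$, $t\in S$. For a torsion-free abelian group $G$ with a fixed total order compatible with addition, the group series semidomain is $S[\![G]\!]=\{\sum_{i=0}^\infty s_ix^{g_i} : s_i\in S,\ g_i\in G,\ g_i<g_{i+1}\text{ for all } i\}$, with addition and multiplication defined as for (formal) polynomials; elements are written with the convention that $s_i=0$ implies $s_{i+1}=0$. The support of $f=\sum s_ix^{g_i}$ is $\operatorname{supp}(f)=\{g_i : s_i\neq0\}$. An element $f$ is irreducible if it is nonzero, not a unit of $S[\![G]\!]$,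 and $f=pq$ with $p,q\in S[\![G]\!]$ implies one of $p,q$ is a unit. *)

theory Defs
  imports Main
begin

definition semidomain :: "'r::idom set \<Rightarrow> bool" where
  "semidomain S \<longleftrightarrow> 0 \<in> S \<and> 1 \<in> S \<and>
     (\<forall>a\<in>S. \<forall>b\<in>S. a + b \<in> S) \<and> (\<forall>a\<in>S. \<forall>b\<in>S. a * b \<in> S)"

definition sunits :: "'r::idom set \<Rightarrow> 'r set" where
  "sunits S = {u \<in> S. u \<noteq> 0 \<and> (\<exists>v\<in>S. v \<noteq> 0 \<and> u * v = 1)}"

definition additively_reduced :: "'r::idom set \<Rightarrow> bool" where
  "additively_reduced S \<longleftrightarrow> (\<forall>a\<in>S. (\<exists>b\<in>S. a + b = 0) \<longrightarrow> a = 0)"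

definition add_atoms :: "'r::idom set \<Rightarrow> 'r set" where
  "add_atoms S = {a \<in> S. a \<noteq> 0 \<and> (\<forall>b\<in>S. \<forall>c\<in>S. a = b + c \<longrightarrow> b = 0 \<or> c = 0)}"

definition additively_furstenberg :: "'r::idom set \<Rightarrow> bool" where
  "additively_furstenberg S \<longleftrightarrow>
     (\<forall>s\<in>S. s \<noteq> 0 \<longrightarrow> (\<exists>a\<in>add_atoms S. \<exists>t\<in>S. s = a + t))"

text \<open>Elements
  sum_i s_i x^(g_i) with strictly increasing g_i are exactly the functions with
  coefficients in S whose support has every element preceded by only finitely many
  support elements (support of order type at most omega).\<close>

definition supp :: "('g \<Rightarrow> 'r::zero) \<Rightarrow> 'g set" where
  "supp f = {g. f g \<noteq> 0}"

definition series :: "'r::idom set \<Rightarrow> ('g::linordered_ab_group_add \<Rightarrow> 'r) set" where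
  "series S = {f. (\<forall>g. f g \<in> S) \<and> (\<forall>g\<in>supp f. finite {h \<in> supp f. h < g})}"

definition series_one :: "'g::linordered_ab_group_add \<Rightarrow> 'r::idom" where
  "series_one = (\<lambda>k. if k = 0 then 1 else 0)"

definition series_mult ::
  "('g::linordered_ab_group_add \<Rightarrow> 'r::idom) \<Rightarrow> ('g \<Rightarrow> 'r) \<Rightarrow> ('g \<Rightarrow> 'r)" where
  "series_mult f h = (\<lambda>k. \<Sum>a\<in>{a. f a \<noteq> 0 \<and> h (k - a) \<noteq> 0}. f a * h (k - a))"

definition series_unit :: "'r::idom set \<Rightarrow> ('g::linordered_ab_group_add \<Rightarrow> 'r) \<Rightarrow> bool" where
  "series_unit S f \<longleftrightarrow> f \<in> series S \<and> (\<exists>q\<in>series S. series_mult f q = series_one)"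

definition series_irreducible ::
  "'r::idom set \<Rightarrow> ('g::linordered_ab_group_add \<Rightarrow> 'r) \<Rightarrow> bool" where
  "series_irreducible S f \<longleftrightarrow> f \<in> series S \<and> f \<noteq> (\<lambda>_. 0) \<and> \<not> series_unit S f \<and>
     (\<forall>p\<in>series S. \<forall>q\<in>series S. f = series_mult p q \<longrightarrow> series_unit S p \<or> series_unit S q)"

definition sum_at_most_irreducibles ::
  "'r::idom set \<Rightarrow> nat \<Rightarrow> ('g::linordered_ab_group_add \<Rightarrow> 'r) \<Rightarrow> bool" where
  "sum_at_most_irreducibles S n f \<longleftrightarrow>
     (\<exists>k\<le>n. \<exists>h::nat \<Rightarrow> ('g \<Rightarrow> 'r). (\<forall>i<k. series_irreducible S (h i)) \<and>
        f = (\<lambda>x. \<Sum>i<k. h i x))"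

definition supp_gt_one :: "('g \<Rightarrow> 'r::zero) \<Rightarrow> bool" where
  "supp_gt_one f \<longleftrightarrow> (\<exists>a\<in>supp f. \<exists>b\<in>supp f. a \<noteq> b)"

end

theory Submission
  imports Defs
begin

text \<open>
  Suppose first that every additive atom of \<open>S\<close> is a unit. A series \<open>h\<close> with a unit
  coefficient whose two least exponents are \<open>x0 < x1\<close> is irreducible as soon as no two
  exponents above \<open>x1\<close> differ by \<open>d = x1 - x0\<close>, and \<open>x1 + d\<close> is an exponent only if the
  coefficient at \<open>x1\<close> is a unit. Indeed, a monomial factor of \<open>h\<close> divides the unit coefficient;
  and the two least exponents of a product \<open>p q\<close> of non-monomials come from those of \<open>p\<close> and
  \<open>q\<close>, with \<open>d\<close> the smaller of their two gaps, so either \<open>p q\<close> has a second pair of exponents at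
  distance \<open>d\<close>, or its coefficient at \<open>x1\<close> is a sum of two nonzero products, hence neither an
  atom nor a unit.

  Given \<open>f\<close> with least exponents \<open>t0 < t1\<close>, let \<open>d = t1 - t0\<close> and cut the group into the
  blocks \<open>[b + k d, b + (k + 1) d)\<close>, where \<open>b\<close> is \<open>t0\<close> or the least exponent at which \<open>f\<close>
  violates the criterion. Sending the exponents in blocks of even and of odd index to two
  different summands, after splitting a unit off suitable coefficients (\<open>S\<close> is additively
  Furstenberg), gives two series satisfying the criterion; so \<open>f\<close> is a sum of at most two
  irreducibles.

  Conversely, let \<open>a\<close> be an atom that is not a unit and write a series with \<open>n + 1\<close>
  coefficients equal to \<open>a\<close> as a sum of at most \<open>n\<close> irreducibles. As \<open>a\<close> is an atom, each of
  these coefficients comes from a single summand, so some summand has two coefficients, both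
  equal to \<open>a\<close>; it is \<open>a\<close> times a series with two exponents, and neither factor is a unit.
\<close>

section \<open>Ordered groups whose bounded below subsets are well-ordered\<close>

definition bdd_below_wellordered :: "'a::linorder itself \<Rightarrow> bool" where
  "bdd_below_wellordered _ \<longleftrightarrow> (\<forall>B::'a set. bdd_below B \<and> B \<noteq> {} \<longrightarrow> (\<exists>m\<in>B. \<forall>x\<in>B. m \<le> x))"

lemma bdd_below_wellorderedD:
  "bdd_below_wellordered TYPE('a::linorder) \<Longrightarrow> bdd_below (B::'a set) \<Longrightarrow> B \<noteq> {} \<Longrightarrow>
    \<exists>m\<in>B. \<forall>x\<in>B. m \<le> x"
  unfolding bdd_below_wellordered_def by simp

lemma bdd_below_wellordered_archimedean:
  fixes b d v :: "'g::linordered_ab_group_add"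
  assumes wo: "bdd_below_wellordered TYPE('g)" and d: "0 < d"
  shows "\<exists>n. v < ((+) d ^^ n) b"
proof (rule ccontr)
  assume "\<nexists>n. v < ((+) d ^^ n) b"
  then have "bdd_below (range (\<lambda>n. v - ((+) d ^^ n) b))"
    by (intro bdd_belowI[of _ 0]) (auto simp: not_less)
  then have "\<exists>m\<in>range (\<lambda>n. v - ((+) d ^^ n) b). \<forall>x\<in>range (\<lambda>n. v - ((+) d ^^ n) b). m \<le> x"
    using bdd_below_wellorderedD[OF wo] by blast
  then obtain n where "\<forall>k. v - ((+) d ^^ n) b \<le> v - ((+) d ^^ k) b"
    by auto
  from this[rule_format, of "Suc n"] d show False
    by simp
qed

lemma exists_alternating_parity:
  fixes b c :: "'g::linordered_ab_group_add"
  assumes wo: "bdd_below_wellordered TYPE('g)" and "b < c"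
  obtains P where "\<And>v. b \<le> v \<Longrightarrow> v < c \<Longrightarrow> P v"
    and "\<And>v. b \<le> v \<Longrightarrow> P (v + (c - b)) \<longleftrightarrow> \<not> P v"
proof -
  define d where "d = c - b"
  have d: "0 < d" "c = b + d"
    using \<open>b < c\<close> unfolding d_def by simp_all
  define m where "m n = ((+) d ^^ n) b" for n
  have m_Suc: "m (Suc n) = m n + d" for n
    by (simp add: m_def add.commute)
  have "strict_mono m"
    by (rule strict_mono_Suc_iff[THEN iffD2]) (simp add: m_Suc d(1))
  have block: "\<exists>!n. m n \<le> v \<and> v < m (Suc n)" if "b \<le> v" for v
  proof (rule ex_ex1I)
    obtain k where "v < m k"
      using bdd_below_wellordered_archimedean[OF wo d(1)] unfolding m_def by blast
    define k0 where "k0 = (LEAST k. v < m k)"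
    have "v < m k0"
      unfolding k0_def using \<open>v < m k\<close> by (rule LeastI)
    moreover have "\<not> v < m 0"
      using that by (simp add: m_def)
    ultimately obtain n where n: "k0 = Suc n"
      by (cases k0) auto
    have "\<not> v < m n"
      using not_less_Least[of n "\<lambda>k. v < m k"] unfolding k0_def[symmetric] n by simp
    then show "\<exists>n. m n \<le> v \<and> v < m (Suc n)"
      using \<open>v < m k0\<close> n by (auto simp: not_less)
  next
    fix n n' assume "m n \<le> v \<and> v < m (Suc n)" "m n' \<le> v \<and> v < m (Suc n')"
    then have "m n < m (Suc n')" "m n' < m (Suc n)"
      by (auto intro: le_less_trans)
    then have "n < Suc n'" "n' < Suc n"
      by (simp_all add: strict_mono_less[OF \<open>strict_mono m\<close>])
    then show "n = n'" by simp
  qed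
  define idx where "idx v = (THE n. m n \<le> v \<and> v < m (Suc n))" for v
  have idx: "idx v = n" if "m n \<le> v" "v < m (Suc n)" for v n
  proof -
    have "m 0 \<le> m n"
      by (simp add: strict_mono_less_eq[OF \<open>strict_mono m\<close>])
    then have "b \<le> v"
      using that(1) by (simp add: m_def)
    then show ?thesis
      unfolding idx_def using block that by (blast intro: the1_equality)
  qed
  show thesis
  proof (rule that[of "\<lambda>v. even (idx v)", unfolded d_def[symmetric]])
    fix v assume "b \<le> v" "v < c"
    then show "even (idx v)" using idx[of 0 v] d(2) by (simp add: m_Suc) (simp add: m_def add.commute)
  next
    fix v assume "b \<le> v"
    then obtain n where "m n \<le> v" "v < m (Suc n)" using block by blast
    then have "idx (v + d) = Suc (idx v)"
      using idx[of n v] idx[of "Suc n" "v + d"] by (simp add: m_Suc)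
    then show "even (idx (v + d)) \<longleftrightarrow> \<not> even (idx v)" by simp
  qed
qed

section \<open>Additive atoms and units\<close>

lemma sunits_memD: "u \<in> sunits S \<Longrightarrow> u \<in> S \<and> u \<noteq> 0"
  unfolding sunits_def by blast

lemma sunits_subset_add_atoms:
  assumes sd: "semidomain S" and furstenberg: "additively_furstenberg S"
  shows "sunits S \<subseteq> add_atoms S"
proof
  fix u assume u: "u \<in> sunits S"
  then obtain v where v: "v \<in> S" "u * v = 1"
    unfolding sunits_def by blast
  have "1 \<in> S"
    using sd unfolding semidomain_def by blast
  then obtain a where a: "a \<in> add_atoms S"
    using furstenberg unfolding additively_furstenberg_def by fastforce
  have "b = 0 \<or> c = 0" if "b \<in> S" "c \<in> S" "u = b + c" for b c
  proof -
    have "a * v * b + a * v * c = a * (u * v)"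
      using that(3) by (simp add: algebra_simps)
    then have "a = a * v * b + a * v * c"
      using v(2) by simp
    moreover have "a * v * b \<in> S" "a * v * c \<in> S"
      using sd a v(1) that(1,2) unfolding semidomain_def add_atoms_def by auto
    ultimately have "a * v * b = 0 \<or> a * v * c = 0"
      using a unfolding add_atoms_def by blast
    then show ?thesis
      using a v(2) unfolding add_atoms_def by auto
  qed
  then show "u \<in> add_atoms S"
    using u unfolding sunits_def add_atoms_def by blast
qed

lemma unit_summand_exists:
  assumes "additively_furstenberg S" "add_atoms S = sunits S" "x \<in> S" "x \<noteq> 0"
  obtains a r where "a \<in> sunits S" "r \<in> S" "x = a + r" "x \<notin> sunits S \<Longrightarrow> r \<noteq> 0"
proof -
  obtain a t where "a \<in> add_atoms S" "t \<in> S" "x = a + t"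
    using assms(1,3,4) unfolding additively_furstenberg_def by blast
  with assms(2) show thesis
    using that by fastforce
qed

locale semidomain_set =
  fixes S :: "'r::idom set"
  assumes semidomain: "semidomain S"
begin

lemma zero_mem: "0 \<in> S" and one_mem: "1 \<in> S"
  and add_mem: "a \<in> S \<Longrightarrow> b \<in> S \<Longrightarrow> a + b \<in> S"
  and mult_mem: "a \<in> S \<Longrightarrow> b \<in> S \<Longrightarrow> a * b \<in> S"
  using semidomain unfolding semidomain_def by auto

lemma sum_mem: "(\<And>i. i \<in> I \<Longrightarrow> c i \<in> S) \<Longrightarrow> sum c I \<in> S"
  by (induction I rule: infinite_finite_induct) (auto simp: zero_mem add_mem)

end

locale reduced_semidomain = semidomain_set S for S :: "'r::idom set" +
  assumes reduced: "additively_reduced S"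
begin

lemma add_eq_0_iff: "a \<in> S \<Longrightarrow> b \<in> S \<Longrightarrow> a + b = 0 \<longleftrightarrow> a = 0 \<and> b = 0"
proof -
  assume "a \<in> S" "b \<in> S"
  then have "a + b = 0 \<Longrightarrow> a = 0" "a + b = 0 \<Longrightarrow> b = 0"
    using reduced unfolding additively_reduced_def by (auto simp: add.commute)
  then show ?thesis by auto
qed

lemma sum_eq_0_iff:
  assumes "finite I" "\<And>i. i \<in> I \<Longrightarrow> c i \<in> S"
  shows "sum c I = 0 \<longleftrightarrow> (\<forall>i\<in>I. c i = 0)"
  using assms by (induction I rule: finite_induct) (auto simp: add_eq_0_iff sum_mem)

lemma sum_in_add_atoms_single_summand:
  assumes "finite I" "\<And>i. i \<in> I \<Longrightarrow> c i \<in> S" "sum c I \<in> add_atoms S"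
    and "i \<in> I" "j \<in> I" "c i \<noteq> 0" "c j \<noteq> 0"
  shows "i = j"
proof (rule ccontr)
  assume "i \<noteq> j"
  have "sum c I = c i + sum c (I - {i})"
    using assms(1,4) by (simp add: sum.remove)
  moreover have "sum c (I - {i}) \<noteq> 0"
    using assms \<open>i \<noteq> j\<close> by (subst sum_eq_0_iff) auto
  moreover have "sum c (I - {i}) \<in> S"
    using assms(2) by (intro sum_mem) auto
  ultimately show False
    using assms(2-4,6) unfolding add_atoms_def by blast
qed

lemma sum_in_add_atoms_eq_summand:
  assumes "finite I" "\<And>i. i \<in> I \<Longrightarrow> c i \<in> S" "sum c I \<in> add_atoms S" "i \<in> I" "c i \<noteq> 0"
  shows "sum c I = c i"
proof -
  have "sum c I = sum c {i}"
    using assms sum_in_add_atoms_single_summand[OF assms(1-3)]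
    by (intro sum.mono_neutral_right) auto
  then show ?thesis
    by simp
qed

end

section \<open>Series and their products\<close>

lemma series_coeff_mem: "f \<in> series S \<Longrightarrow> f g \<in> S"
  unfolding series_def by blast

lemma series_supp_bdd_below:
  assumes "f \<in> series S"
  shows "bdd_below (supp f)"
proof (cases "supp f = {}")
  case False
  then obtain g where g: "g \<in> supp f" by blast
  have fin: "finite {h \<in> supp f. h < g}"
    using assms g unfolding series_def by blast
  define m where "m = Min (insert g {h \<in> supp f. h < g})"
  have "m \<le> x" if "x \<in> supp f" for x
  proof (cases "x < g")
    case True
    then show ?thesis using that fin unfolding m_def by (intro Min_le) auto
  next
    case False
    have "m \<le> g" using fin unfolding m_def by (intro Min_le) auto
    with False show ?thesis by simp
  qed
  then show ?thesis by (rule bdd_belowI)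
qed simp

lemma series_of_supp_subset:
  assumes "f \<in> series S" "\<And>v. h v \<in> S" "supp h \<subseteq> supp f"
  shows "h \<in> series S"
  unfolding series_def
proof (intro CollectI conjI allI ballI)
  fix g assume "g \<in> supp h"
  then have "finite {k \<in> supp f. k < g}"
    using assms(1,3) unfolding series_def by blast
  moreover have "{k \<in> supp h. k < g} \<subseteq> {k \<in> supp f. k < g}"
    using assms(3) by blast
  ultimately show "finite {k \<in> supp h. k < g}"
    by (rule finite_subset[rotated])
qed (use assms(2) in blast)

lemma series_of_finite_supp: "(\<And>v. h v \<in> S) \<Longrightarrow> finite (supp h) \<Longrightarrow> h \<in> series S"
  unfolding series_def by auto

definition two_least :: "'a::linorder set \<Rightarrow> 'a \<Rightarrow> 'a \<Rightarrow> bool" where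
  "two_least X x0 x1 \<longleftrightarrow> x0 \<in> X \<and> x1 \<in> X \<and> x0 < x1 \<and> (\<forall>v\<in>X. v = x0 \<or> x1 \<le> v)"

lemma two_least_le: "two_least X x0 x1 \<Longrightarrow> v \<in> X \<Longrightarrow> x0 \<le> v"
  unfolding two_least_def by force

lemma two_least_unique: "two_least X x0 x1 \<Longrightarrow> two_least X y0 y1 \<Longrightarrow> x0 = y0 \<and> x1 = y1"
  unfolding two_least_def by (metis antisym_conv1 order.strict_trans2 order_less_asym')

lemma exists_two_least:
  assumes wo: "bdd_below_wellordered TYPE('a::linorder)"
    and "bdd_below (X::'a set)" "x \<in> X" "y \<in> X" "x \<noteq> y"
  obtains x0 x1 where "two_least X x0 x1"
proof -
  obtain x0 where x0: "x0 \<in> X" "\<forall>v\<in>X. x0 \<le> v"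
    using bdd_below_wellorderedD[OF wo assms(2)] assms(3) by blast
  have "bdd_below (X - {x0})" "X - {x0} \<noteq> {}"
    using assms(2-5) by (auto intro: bdd_below_mono)
  then obtain x1 where x1: "x1 \<in> X - {x0}" "\<forall>v\<in>X - {x0}. x1 \<le> v"
    using bdd_below_wellorderedD[OF wo] by blast
  have "two_least X x0 x1"
    unfolding two_least_def using x0 x1 by (auto simp: order.strict_iff_order)
  then show thesis by (rule that)
qed

lemma finite_convolution_supp:
  fixes p q :: "'g::linordered_ab_group_add \<Rightarrow> 'r::idom"
  assumes wo: "bdd_below_wellordered TYPE('g)" and "p \<in> series S" "q \<in> series S"
  shows "finite {a. p a \<noteq> 0 \<and> q (k - a) \<noteq> 0}"
proof (rule ccontr)
  define I where "I = {a. p a \<noteq> 0 \<and> q (k - a) \<noteq> 0}"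
  assume "infinite {a. p a \<noteq> 0 \<and> q (k - a) \<noteq> 0}"
  then have infinite: "infinite I"
    unfolding I_def .
  have "(\<lambda>a. k - a) ` I \<subseteq> supp q"
    unfolding I_def supp_def by auto
  then have "bdd_below ((\<lambda>a. k - a) ` I)"
    using series_supp_bdd_below[OF assms(3)] by (rule bdd_below_mono[rotated])
  moreover have "(\<lambda>a. k - a) ` I \<noteq> {}"
    using infinite by auto
  ultimately have "\<exists>m\<in>(\<lambda>a. k - a) ` I. \<forall>x\<in>(\<lambda>a. k - a) ` I. m \<le> x"
    by (rule bdd_below_wellorderedD[OF wo])
  then obtain a0 where a0: "a0 \<in> I" "\<forall>a\<in>I. k - a0 \<le> k - a"
    by blast
  then have "I \<subseteq> insert a0 {h \<in> supp p. h < a0}"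
    unfolding I_def supp_def by (auto simp: order.order_iff_strict)
  moreover have "finite {h \<in> supp p. h < a0}"
    using assms(2) a0(1) unfolding series_def supp_def I_def by auto
  ultimately show False
    using infinite finite_subset by blast
qed

lemma series_mult_commute: "series_mult p q = series_mult q p"
proof
  fix k
  show "series_mult p q k = series_mult q p k"
    unfolding series_mult_def
    by (rule sum.reindex_bij_witness[where i="\<lambda>a. k - a" and j="\<lambda>a. k - a"])
      (auto simp: mult.commute)
qed

lemma series_mult_monom: "series_mult ((\<lambda>_. 0)(g := s)) q = (\<lambda>k. s * q (k - g))"
proof
  fix k
  have "{a. ((\<lambda>_. 0)(g := s)) a \<noteq> 0 \<and> q (k - a) \<noteq> 0} = (if s * q (k - g) = 0 then {} else {g})"
    by auto
  then show "series_mult ((\<lambda>_. 0)(g := s)) q k = s * q (k - g)"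
    unfolding series_mult_def by auto
qed

context semidomain_set
begin

lemma monom_series_mem: "s \<in> S \<Longrightarrow> (\<lambda>_. 0)(g := s) \<in> series S"
  by (rule series_of_finite_supp) (auto simp: zero_mem supp_def intro: finite_subset[of _ "{g}"])

lemma series_unit_monom:
  assumes "s \<in> sunits S"
  shows "series_unit S ((\<lambda>_. 0)(g := s))"
proof -
  obtain v where v: "v \<in> S" "s * v = 1"
    using assms unfolding sunits_def by blast
  have "series_mult ((\<lambda>_. 0)(g := s)) ((\<lambda>_. 0)(- g := v)) = series_one"
    unfolding series_mult_monom series_one_def using v(2) by auto
  then show ?thesis
    unfolding series_unit_def using assms v(1) unfolding sunits_def
    by (blast intro: monom_series_mem)
qed

lemma sunits_of_series_unit_monom:
  assumes "series_unit S ((\<lambda>_. 0)(g := s))"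
  shows "s \<in> sunits S"
proof -
  obtain q where q: "q \<in> series S" "series_mult ((\<lambda>_. 0)(g := s)) q = series_one"
    using assms unfolding series_unit_def by blast
  then have "s * q (- g) = 1"
    using fun_cong[OF q(2), of 0] unfolding series_mult_monom series_one_def by simp
  moreover have "s \<in> S"
    using assms series_coeff_mem[of _ S g] unfolding series_unit_def by fastforce
  ultimately show ?thesis
    unfolding sunits_def using series_coeff_mem[OF q(1)] by force
qed

lemma series_unit_monomial_factor:
  assumes "p \<in> series S" "q \<in> series S" "series_mult p q u \<in> sunits S" "supp p \<subseteq> {g}"
  shows "series_unit S p"
proof -
  have p: "p = (\<lambda>_. 0)(g := p g)"
    using assms(4) unfolding supp_def by (intro ext) auto
  have "series_mult p q = (\<lambda>k. p g * q (k - g))"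
    using series_mult_monom[of g "p g" q] unfolding p[symmetric] .
  then obtain v where "v \<in> S" "p g * (q (u - g) * v) = 1"
    using assms(3) unfolding sunits_def by (auto simp: mult.assoc)
  moreover have "p g \<in> S" "q (u - g) \<in> S"
    using assms(1,2) by (simp_all add: series_coeff_mem)
  ultimately have "p g \<in> sunits S"
    unfolding sunits_def by (auto intro!: bexI[of _ "q (u - g) * v"] mult_mem)
  then show ?thesis
    using series_unit_monom[of "p g" g] unfolding p[symmetric] by blast
qed

end

context reduced_semidomain
begin

lemma mem_supp_series_mult:
  fixes p q :: "'g::linordered_ab_group_add \<Rightarrow> 'r"
  assumes "bdd_below_wellordered TYPE('g)" and "p \<in> series S" "q \<in> series S"
  shows "k \<in> supp (series_mult p q) \<longleftrightarrow> (\<exists>a\<in>supp p. k - a \<in> supp q)"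
proof -
  have "series_mult p q k = 0 \<longleftrightarrow> {a. p a \<noteq> 0 \<and> q (k - a) \<noteq> 0} = {}"
    unfolding series_mult_def using finite_convolution_supp[OF assms] assms(2,3)
    by (subst sum_eq_0_iff) (auto simp: series_coeff_mem mult_mem)
  then show ?thesis
    unfolding supp_def by auto
qed

lemma add_mem_supp_series_mult:
  fixes p q :: "'g::linordered_ab_group_add \<Rightarrow> 'r"
  assumes "bdd_below_wellordered TYPE('g)" and "p \<in> series S" "q \<in> series S"
    and "a \<in> supp p" "b \<in> supp q"
  shows "a + b \<in> supp (series_mult p q)"
  unfolding mem_supp_series_mult[OF assms(1-3)] using assms(4,5) by (intro bexI[of _ a]) auto

lemma series_mult_not_add_atom:
  fixes p q :: "'g::linordered_ab_group_add \<Rightarrow> 'r"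
  assumes "bdd_below_wellordered TYPE('g)" and "p \<in> series S" "q \<in> series S"
    and "a \<in> supp p" "k - a \<in> supp q" "b \<in> supp p" "k - b \<in> supp q" "a \<noteq> b"
  shows "series_mult p q k \<notin> add_atoms S"
proof
  assume "series_mult p q k \<in> add_atoms S"
  then show False
    using sum_in_add_atoms_single_summand[OF finite_convolution_supp[OF assms(1-3)],
        where c = "\<lambda>a. p a * q (k - a)" and i = a and j = b]
      assms(2-8) unfolding series_mult_def supp_def by (auto simp: series_coeff_mem mult_mem)
qed

lemma series_unit_supp:
  fixes h :: "'g::linordered_ab_group_add \<Rightarrow> 'r"
  assumes wo: "bdd_below_wellordered TYPE('g)" and "series_unit S h" "x \<in> supp h" "y \<in> supp h"
  shows "x = y"
proof -
  obtain q where h: "h \<in> series S" and q: "q \<in> series S" "series_mult h q = series_one"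
    using assms(2) unfolding series_unit_def by blast
  have "supp (series_mult h q) = {0}"
    unfolding q(2) series_one_def supp_def by auto
  moreover have "q \<noteq> (\<lambda>_. 0)"
    using q(2) unfolding series_mult_def series_one_def by (auto dest: fun_cong[of _ _ 0])
  then obtain n where "n \<in> supp q"
    unfolding supp_def by auto
  ultimately have "x + n = 0" "y + n = 0"
    using add_mem_supp_series_mult[OF wo h q(1)] assms(3,4) by blast+
  then show ?thesis
    by (simp add: eq_neg_iff_add_eq_0[symmetric])
qed

section \<open>An irreducibility criterion\<close>

lemma two_least_supp_series_mult:
  fixes p q :: "'g::linordered_ab_group_add \<Rightarrow> 'r"
  assumes wo: "bdd_below_wellordered TYPE('g)" and p: "p \<in> series S" and q: "q \<in> series S"
    and P: "two_least (supp p) p0 p1" and Q: "two_least (supp q) q0 q1"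
    and gap: "p1 - p0 \<le> q1 - q0"
  shows "two_least (supp (series_mult p q)) (p0 + q0) (p1 + q0)"
proof -
  have "v = p0 + q0 \<or> p1 + q0 \<le> v" if v: "v \<in> supp (series_mult p q)" for v
  proof -
    obtain a where a: "a \<in> supp p" "v - a \<in> supp q"
      using v unfolding mem_supp_series_mult[OF wo p q] by blast
    show ?thesis
    proof (cases "a = p0")
      case True
      then consider "v - a = q0" | "q1 \<le> v - a"
        using Q a(2) unfolding two_least_def by blast
      then show ?thesis
        using True gap by cases (auto simp: algebra_simps)
    next
      case False
      then have "p1 \<le> a" "q0 \<le> v - a"
        using P a two_least_le[OF Q] unfolding two_least_def by auto
      then show ?thesis
        using add_mono by fastforce
    qed
  qed
  moreover have "p0 + q0 \<in> supp (series_mult p q)" "p1 + q0 \<in> supp (series_mult p q)"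
    using P Q unfolding two_least_def by (auto intro: add_mem_supp_series_mult[OF wo p q])
  ultimately show ?thesis
    using P unfolding two_least_def by auto
qed

lemma criterion_excludes_factorization:
  fixes p q :: "'g::linordered_ab_group_add \<Rightarrow> 'r"
  assumes wo: "bdd_below_wellordered TYPE('g)" and units: "sunits S \<subseteq> add_atoms S"
    and p: "p \<in> series S" and q: "q \<in> series S"
    and P: "two_least (supp p) p0 p1" and Q: "two_least (supp q) q0 q1"
    and gap: "p1 - p0 \<le> q1 - q0"
    and least: "two_least (supp (series_mult p q)) x0 x1"
    and no_pairs: "\<And>v. v \<in> supp (series_mult p q) \<Longrightarrow> x1 < v \<Longrightarrow>
      v + (x1 - x0) \<notin> supp (series_mult p q)"
    and top: "series_mult p q x1 \<in> sunits S \<or> x1 + (x1 - x0) \<notin> supp (series_mult p q)"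
  shows False
proof -
  have x: "x0 = p0 + q0" "x1 = p1 + q0"
    using two_least_unique[OF least two_least_supp_series_mult[OF wo p q P Q gap]] by auto
  have top_pair: "p1 + q1 \<in> supp (series_mult p q)"
    using P Q unfolding two_least_def by (auto intro: add_mem_supp_series_mult[OF wo p q])
  show False
  proof (cases "p1 - p0 = q1 - q0")
    case True
    \<comment> \<open>\<open>x1 = p0 + q1 = p1 + q0\<close> receives two nonzero products\<close>
    then have "x1 - p0 = q1" "x1 - p1 = q0"
      using x by (simp_all add: algebra_simps)
    then have "series_mult p q x1 \<notin> add_atoms S"
      using P Q by (intro series_mult_not_add_atom[OF wo p q, of p0 _ p1]) (auto simp: two_least_def)
    moreover have "x1 + (x1 - x0) = p1 + q1"
      using True x by (simp add: algebra_simps)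
    ultimately show False
      using top top_pair units by auto
  next
    case False
    then have "x1 < p0 + q1"
      using gap x by (simp add: algebra_simps)
    moreover have "p0 + q1 \<in> supp (series_mult p q)"
      using P Q unfolding two_least_def by (auto intro: add_mem_supp_series_mult[OF wo p q])
    moreover have "p0 + q1 + (x1 - x0) = p1 + q1"
      using x by (simp add: algebra_simps)
    ultimately show False
      using no_pairs top_pair by metis
  qed
qed

lemma series_irreducibleI:
  fixes h :: "'g::linordered_ab_group_add \<Rightarrow> 'r"
  assumes wo: "bdd_below_wellordered TYPE('g)" and units: "sunits S \<subseteq> add_atoms S"
    and h: "h \<in> series S" and unit: "h u \<in> sunits S"
    and least: "two_least (supp h) x0 x1"
    and no_pairs: "\<And>v. v \<in> supp h \<Longrightarrow> x1 < v \<Longrightarrow> v + (x1 - x0) \<notin> supp h"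
    and top: "h x1 \<in> sunits S \<or> x1 + (x1 - x0) \<notin> supp h"
  shows "series_irreducible S h"
proof -
  have "series_unit S p \<or> series_unit S q"
    if p: "p \<in> series S" and q: "q \<in> series S" and hpq: "h = series_mult p q" for p q
  proof (rule ccontr)
    assume nonunits: "\<not> (series_unit S p \<or> series_unit S q)"
    have "\<not> supp p \<subseteq> {g}" "\<not> supp q \<subseteq> {g}" for g
      using series_unit_monomial_factor[OF p q] series_unit_monomial_factor[OF q p]
        unit hpq series_mult_commute[of p q] nonunits by auto
    then have "\<exists>x\<in>supp p. \<exists>y\<in>supp p. x \<noteq> y" "\<exists>x\<in>supp q. \<exists>y\<in>supp q. x \<noteq> y"
      by blast+
    then obtain p0 p1 q0 q1 where P: "two_least (supp p) p0 p1" and Q: "two_least (supp q) q0 q1"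
      using exists_two_least[OF wo series_supp_bdd_below[OF p]]
        exists_two_least[OF wo series_supp_bdd_below[OF q]] by metis
    show False
    proof (cases "p1 - p0 \<le> q1 - q0")
      case True
      then show False
        using criterion_excludes_factorization[OF wo units p q P Q] least no_pairs top hpq by blast
    next
      case False
      then have "q1 - q0 \<le> p1 - p0"
        by simp
      then show False
        using criterion_excludes_factorization[OF wo units q p Q P] least no_pairs top
        unfolding hpq series_mult_commute[of p q] by blast
    qed
  qed
  moreover have "h \<noteq> (\<lambda>_. 0)"
    using unit unfolding sunits_def by auto
  moreover have "\<not> series_unit S h"
    using series_unit_supp[OF wo] least unfolding two_least_def by blast
  ultimately show ?thesis
    unfolding series_irreducible_def using h by blast
qed

lemma series_irreducible_alternating:
  fixes h :: "'g::linordered_ab_group_add \<Rightarrow> 'r"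
  assumes wo: "bdd_below_wellordered TYPE('g)" and units: "sunits S \<subseteq> add_atoms S"
    and h: "h \<in> series S" and unit: "h u \<in> sunits S"
    and least: "two_least (supp h) x0 x1"
    and base: "\<And>v. x0 \<le> v \<Longrightarrow> v < x1 \<Longrightarrow> P v"
    and step: "\<And>v. x0 \<le> v \<Longrightarrow> P (v + (x1 - x0)) \<longleftrightarrow> \<not> P v"
    and tail: "\<And>v. v \<in> supp h \<Longrightarrow> x1 < v \<Longrightarrow> P v = e"
    and top: "e \<Longrightarrow> h x1 \<in> sunits S"
  shows "series_irreducible S h"
proof (rule series_irreducibleI[OF wo units h unit least])
  have x: "x0 < x1"
    using least unfolding two_least_def by blast
  show "v + (x1 - x0) \<notin> supp h" if "v \<in> supp h" "x1 < v" for v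
  proof
    assume "v + (x1 - x0) \<in> supp h"
    moreover have "v < v + (x1 - x0)"
      using x by simp
    moreover have "x0 < v"
      using that(2) x by simp
    ultimately show False
      using that tail[of v] tail[of "v + (x1 - x0)"] step[of v] by (auto simp: less_imp_le)
  qed
  have "\<not> P x1" "P (x1 + (x1 - x0))"
    using base[of x0] step[of x0] step[of x1] x by auto
  then show "h x1 \<in> sunits S \<or> x1 + (x1 - x0) \<notin> supp h"
    using tail[of "x1 + (x1 - x0)"] top x by (cases e) auto
qed

lemma not_series_irreducible_const_coeffs:
  fixes h :: "'g::linordered_ab_group_add \<Rightarrow> 'r"
  assumes wo: "bdd_below_wellordered TYPE('g)" and h: "h \<in> series S"
    and a: "a \<notin> sunits S" and coeffs: "\<And>v. v \<in> supp h \<Longrightarrow> h v = a"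
    and "x \<in> supp h" "y \<in> supp h" "x \<noteq> y"
  shows "\<not> series_irreducible S h"
proof
  assume irreducible: "series_irreducible S h"
  define c :: "'g \<Rightarrow> 'r" where "c v = (if v \<in> supp h then 1 else 0)" for v
  have "supp c = supp h"
    unfolding c_def supp_def by auto
  then have c: "c \<in> series S"
    using h by (intro series_of_supp_subset[OF h]) (auto simp: c_def zero_mem one_mem)
  have "h = series_mult ((\<lambda>_. 0)(0 := a)) c"
    unfolding series_mult_monom c_def using coeffs by (auto simp: supp_def)
  moreover have "(\<lambda>_. 0)(0 := a) \<in> series S"
    using h coeffs \<open>x \<in> supp h\<close> by (intro monom_series_mem) (metis series_coeff_mem)
  moreover have "\<not> series_unit S ((\<lambda>_. 0)(0 := a))"
    using sunits_of_series_unit_monom a by blast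
  moreover have "\<not> series_unit S c"
    using series_unit_supp[OF wo, of c x y] assms(5-7) \<open>supp c = supp h\<close> by auto
  ultimately show False
    using irreducible c unfolding series_irreducible_def by blast
qed

end

section \<open>Sums of irreducibles\<close>

lemma sum_at_most_irreducibles_mono:
  "sum_at_most_irreducibles S m f \<Longrightarrow> m \<le> n \<Longrightarrow> sum_at_most_irreducibles S n f"
  unfolding sum_at_most_irreducibles_def by (blast intro: le_trans)

lemma sum_at_most_irreducibles_single:
  "series_irreducible S f \<Longrightarrow> sum_at_most_irreducibles S 1 f"
  unfolding sum_at_most_irreducibles_def by (intro exI[of _ 1] conjI exI[of _ "\<lambda>_. f"]) auto

lemma sum_at_most_irreducibles_pair:
  assumes "series_irreducible S A" "series_irreducible S B"
  shows "sum_at_most_irreducibles S 2 (\<lambda>x. A x + B x)"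
  unfolding sum_at_most_irreducibles_def using assms
  by (intro exI[of _ 2] conjI exI[of _ "\<lambda>i. if i = 0 then A else B"])
    (auto simp: numeral_2_eq_2 less_Suc_eq)

lemma infinite_UNIV_nontrivial_ordered_group:
  assumes "(g::'g::linordered_ab_group_add) \<noteq> 0"
  shows "infinite (UNIV :: 'g set)"
proof
  obtain d :: 'g where "0 < d"
    using assms neg_0_less_iff_less by (metis linorder_neqE)
  assume "finite (UNIV :: 'g set)"
  then have "Max UNIV + d \<le> Max UNIV"
    by (rule Max_ge) simp
  with \<open>0 < d\<close> show False
    by simp
qed

context reduced_semidomain
begin

lemma atomic_sum_pigeonhole:
  assumes card: "k < card (supp f)"
    and h: "\<And>i. i < k \<Longrightarrow> h i \<in> series S" and f: "f = (\<lambda>x. \<Sum>i<k. h i x)"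
    and atoms: "\<And>v. v \<in> supp f \<Longrightarrow> f v \<in> add_atoms S"
  obtains i x y where "i < k" "x \<in> supp (h i)" "y \<in> supp (h i)" "x \<noteq> y"
    and "\<And>v. v \<in> supp (h i) \<Longrightarrow> h i v = f v"
proof -
  have coeffs: "\<And>i v. i \<in> {..<k} \<Longrightarrow> h i v \<in> S"
    using h series_coeff_mem by blast
  have agree: "h i v = f v" if "i < k" "v \<in> supp (h i)" for i v
  proof -
    have "(\<Sum>j<k. h j v) \<noteq> 0"
      using that coeffs by (subst sum_eq_0_iff) (auto simp: supp_def)
    then have "(\<Sum>j<k. h j v) \<in> add_atoms S"
      using atoms[of v] f unfolding supp_def by simp
    then show ?thesis
      using sum_in_add_atoms_eq_summand[where c = "\<lambda>j. h j v", OF finite_lessThan[of k] coeffs]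
        that f
      unfolding supp_def by simp
  qed
  have nonzero_summand: "\<forall>v\<in>supp f. \<exists>i. i < k \<and> h i v \<noteq> 0"
  proof (rule ballI, rule ccontr)
    fix v assume "v \<in> supp f" "\<nexists>i. i < k \<and> h i v \<noteq> 0"
    then show False
      using f unfolding supp_def by simp
  qed
  obtain sel where sel: "\<forall>v\<in>supp f. sel v < k \<and> h (sel v) v \<noteq> 0"
    using bchoice[OF nonzero_summand] by blast
  have "\<not> inj_on sel (supp f)"
  proof
    assume "inj_on sel (supp f)"
    then have "card (supp f) \<le> card {..<k}"
      using sel by (intro card_inj_on_le) auto
    with card show False
      by simp
  qed
  then obtain x y where "x \<in> supp f" "y \<in> supp f" "x \<noteq> y" "sel x = sel y"
    unfolding inj_on_def by blast
  moreover have "sel x < k" "x \<in> supp (h (sel x))" "y \<in> supp (h (sel x))"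
    using sel calculation unfolding supp_def by auto
  ultimately show thesis
    using that agree by blast
qed

lemma add_atoms_eq_sunits_if_bounded_irreducible_sums:
  assumes wo: "bdd_below_wellordered TYPE('g::linordered_ab_group_add)"
    and nontrivial: "\<exists>g::'g. g \<noteq> 0" and furstenberg: "additively_furstenberg S" and "1 \<le> n"
    and sums: "\<forall>f::'g \<Rightarrow> 'r. f \<in> series S \<and> supp_gt_one f \<longrightarrow> sum_at_most_irreducibles S n f"
  shows "add_atoms S = sunits S"
proof (rule ccontr)
  assume "add_atoms S \<noteq> sunits S"
  then obtain a where a: "a \<in> add_atoms S" "a \<notin> sunits S"
    using sunits_subset_add_atoms[OF semidomain furstenberg] by blast
  obtain P :: "'g set" where P: "finite P" "card P = Suc n"
    using infinite_arbitrarily_large infinite_UNIV_nontrivial_ordered_group nontrivial by metis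
  define f :: "'g \<Rightarrow> 'r" where "f v = (if v \<in> P then a else 0)" for v
  have supp_f: "supp f = P"
    using a unfolding f_def supp_def add_atoms_def by auto
  have "f \<in> series S"
    using a P(1) supp_f by (intro series_of_finite_supp) (auto simp: f_def zero_mem add_atoms_def)
  moreover have "supp_gt_one f"
    using card_le_Suc0_iff_eq[OF P(1)] P(2) \<open>1 \<le> n\<close> supp_f unfolding supp_gt_one_def by auto
  ultimately obtain k h where "k \<le> n" and irreducible: "\<And>i. i < k \<Longrightarrow> series_irreducible S (h i)"
    and sum: "f = (\<lambda>x. \<Sum>i<k. h i x)"
    using sums unfolding sum_at_most_irreducibles_def by blast
  have h: "\<And>i. i < k \<Longrightarrow> h i \<in> series S"
    using irreducible unfolding series_irreducible_def by blast
  have atoms: "\<And>v. v \<in> supp f \<Longrightarrow> f v \<in> add_atoms S"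
    using a supp_f by (simp add: f_def)
  have "k < card (supp f)"
    using P supp_f \<open>k \<le> n\<close> by simp
  then obtain i x y where i: "i < k" "x \<in> supp (h i)" "y \<in> supp (h i)" "x \<noteq> y"
    and agree: "\<And>v. v \<in> supp (h i) \<Longrightarrow> h i v = f v"
    using atomic_sum_pigeonhole[OF _ h sum atoms] by blast
  have "h i v = a" if "v \<in> supp (h i)" for v
    using agree[OF that] that unfolding supp_def f_def by auto
  then show False
    using not_series_irreducible_const_coeffs[OF wo h[OF i(1)] a(2) _ i(2-4)] irreducible[OF i(1)]
    by blast
qed

end

section \<open>Splitting a series into two irreducibles\<close>

locale series_least_exponents = reduced_semidomain S for S :: "'r::idom set" +
  fixes f :: "'g::linordered_ab_group_add \<Rightarrow> 'r" and t0 t1 :: 'g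
  assumes wellordered: "bdd_below_wellordered TYPE('g)"
    and furstenberg: "additively_furstenberg S" and atoms_eq_units: "add_atoms S = sunits S"
    and series: "f \<in> series S" and least: "two_least (supp f) t0 t1"
begin

abbreviation \<delta> :: 'g where "\<delta> \<equiv> t1 - t0"

lemma units_subset_atoms: "sunits S \<subseteq> add_atoms S"
  using atoms_eq_units by simp

lemma coeff_mem: "f v \<in> S"
  using series by (rule series_coeff_mem)

lemma t0_mem: "t0 \<in> supp f" and t1_mem: "t1 \<in> supp f" and t0_less_t1: "t0 < t1"
  and supp_cases: "v \<in> supp f \<Longrightarrow> v = t0 \<or> t1 \<le> v"
  using least unfolding two_least_def by auto

lemma coeff_eq_0_below_t1: "v \<noteq> t0 \<Longrightarrow> v < t1 \<Longrightarrow> f v = 0"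
  using supp_cases[of v] unfolding supp_def by force

lemma sum_two_irreducibles_if_least_coeffs_nonunits:
  assumes "f t0 \<notin> sunits S" "f t1 \<notin> sunits S"
  shows "sum_at_most_irreducibles S 2 f"
proof -
  obtain a0 r0 where a0: "a0 \<in> sunits S" "r0 \<in> S" "f t0 = a0 + r0" "r0 \<noteq> 0"
    using unit_summand_exists[OF furstenberg atoms_eq_units coeff_mem] t0_mem assms(1)
    unfolding supp_def by blast
  obtain a1 r1 where a1: "a1 \<in> sunits S" "r1 \<in> S" "f t1 = a1 + r1" "r1 \<noteq> 0"
    using unit_summand_exists[OF furstenberg atoms_eq_units coeff_mem] t1_mem assms(2)
    unfolding supp_def by blast
  obtain P where base: "\<And>v. t0 \<le> v \<Longrightarrow> v < t1 \<Longrightarrow> P v"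
    and step: "\<And>v. t0 \<le> v \<Longrightarrow> P (v + \<delta>) \<longleftrightarrow> \<not> P v"
    using exists_alternating_parity[OF wellordered t0_less_t1] by blast
  define A where "A = (\<lambda>v. if t1 < v \<and> \<not> P v then f v else 0)(t0 := a0, t1 := r1)"
  define B where "B = (\<lambda>v. if t1 < v \<and> P v then f v else 0)(t0 := r0, t1 := a1)"
  have "f v = A v + B v" for v
    using a0(3) a1(3) coeff_eq_0_below_t1[of v] t0_less_t1 unfolding A_def B_def
    by (auto simp: add.commute not_less)
  then have sum: "f = (\<lambda>v. A v + B v)" ..
  have A_supp: "supp A \<subseteq> supp f" and B_supp: "supp B \<subseteq> supp f"
    using t0_mem t1_mem unfolding A_def B_def supp_def by auto
  have A_coeffs: "A v \<in> S" and B_coeffs: "B v \<in> S" for v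
    using a0 a1 sunits_memD coeff_mem zero_mem unfolding A_def B_def by auto
  have "series_irreducible S A"
  proof (rule series_irreducible_alternating[where P = P and e = False and u = t0,
        OF wellordered units_subset_atoms _ _ _ base step])
    show "A \<in> series S"
      using A_coeffs A_supp by (rule series_of_supp_subset[OF series])
    show "A t0 \<in> sunits S" "two_least (supp A) t0 t1"
      using a0 a1 t0_less_t1 sunits_memD unfolding A_def two_least_def supp_def by auto
    show "\<And>v. v \<in> supp A \<Longrightarrow> t1 < v \<Longrightarrow> P v = False"
      using t0_less_t1 unfolding A_def supp_def by (auto split: if_splits)
    show "False \<Longrightarrow> A t1 \<in> sunits S"
      by simp
  qed
  moreover have "series_irreducible S B"
  proof (rule series_irreducible_alternating[where P = P and e = True and u = t1,
        OF wellordered units_subset_atoms _ _ _ base step])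
    show "B \<in> series S"
      using B_coeffs B_supp by (rule series_of_supp_subset[OF series])
    show unit: "B t1 \<in> sunits S" and "two_least (supp B) t0 t1"
      using a0 a1 t0_less_t1 sunits_memD unfolding B_def two_least_def supp_def by auto
    show "True \<Longrightarrow> B t1 \<in> sunits S"
      using unit by simp
    show "\<And>v. v \<in> supp B \<Longrightarrow> t1 < v \<Longrightarrow> P v = True"
      using t0_less_t1 unfolding B_def supp_def by (auto split: if_splits)
  qed
  ultimately show ?thesis
    unfolding sum by (rule sum_at_most_irreducibles_pair)
qed

text \<open>
  The lower ends of the pairs of exponents of \<open>f\<close> at distance \<open>\<delta>\<close> that are forbidden by
  \<open>series_irreducibleI\<close>; the pair starting at \<open>t1\<close> is harmless when \<open>f t1\<close> is a unit.
\<close>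

definition threshold :: 'g where
  "threshold = (if f t1 \<in> sunits S then t1 else t0)"

definition pair_starts :: "'g set" where
  "pair_starts = {v \<in> supp f. threshold < v \<and> v + \<delta> \<in> supp f}"

lemma threshold_unit: "f t0 \<in> sunits S \<or> f t1 \<in> sunits S \<Longrightarrow> f threshold \<in> sunits S"
  unfolding threshold_def by auto

lemma threshold_le_t1: "threshold \<le> t1"
  unfolding threshold_def using t0_less_t1 by auto

lemma series_irreducible_if_no_pair_starts:
  assumes units: "f t0 \<in> sunits S \<or> f t1 \<in> sunits S" and no_pairs: "pair_starts = {}"
  shows "series_irreducible S f"
proof (rule series_irreducibleI[OF wellordered units_subset_atoms series threshold_unit[OF units]
      least])
  show "v + \<delta> \<notin> supp f" if "v \<in> supp f" "t1 < v" for v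
    using that threshold_le_t1 no_pairs unfolding pair_starts_def by fastforce
  show "f t1 \<in> sunits S \<or> t1 + \<delta> \<notin> supp f"
    using t1_mem t0_less_t1 no_pairs unfolding pair_starts_def threshold_def by auto
qed

lemma series_irreducible_below_pair_start:
  assumes units: "f t0 \<in> sunits S \<or> f t1 \<in> sunits S"
    and b0: "b0 \<in> pair_starts" and b0_least: "\<And>v. v \<in> pair_starts \<Longrightarrow> b0 \<le> v"
    and step: "\<And>v. b0 \<le> v \<Longrightarrow> P (v + \<delta>) \<longleftrightarrow> \<not> P v"
    and A: "A \<in> series S" "supp A \<subseteq> supp f" "t1 \<in> supp A"
    and A_below: "\<And>v. v < b0 \<Longrightarrow> A v = f v"
    and A_above: "\<And>v. v \<in> supp A \<Longrightarrow> b0 \<le> v \<Longrightarrow> P v"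
  shows "series_irreducible S A"
proof -
  have "threshold < b0"
    using b0 unfolding pair_starts_def by blast
  then have "t0 < b0"
    using threshold_le_t1 t0_less_t1 unfolding threshold_def by (auto split: if_splits)
  then have "A t0 = f t0"
    by (rule A_below)
  then have A_least: "two_least (supp A) t0 t1"
    using A least t0_mem unfolding two_least_def supp_def by auto
  have no_pair: False if "v \<in> supp A" "v + \<delta> \<in> supp A" "threshold < v" for v
  proof -
    have "v \<in> pair_starts"
      using that A(2) unfolding pair_starts_def by auto
    then have "b0 \<le> v" "b0 \<le> v + \<delta>"
      using b0_least t0_less_t1 by (auto intro: order_trans[of _ v])
    then show False
      using step A_above that(1,2) by blast
  qed
  show ?thesis
  proof (rule series_irreducibleI[OF wellordered units_subset_atoms A(1) _ A_least])
    show "A threshold \<in> sunits S"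
      using A_below[OF \<open>threshold < b0\<close>] threshold_unit[OF units] by simp
    show "v + \<delta> \<notin> supp A" if "v \<in> supp A" "t1 < v" for v
      using no_pair[of v] that threshold_le_t1 by fastforce
    show "A t1 \<in> sunits S \<or> t1 + \<delta> \<notin> supp A"
      using no_pair[of t1] A(3) A_below[of t1] \<open>threshold < b0\<close> t0_less_t1
      unfolding threshold_def by (auto split: if_splits)
  qed
qed

lemma sum_two_irreducibles_split_at_pair_start:
  assumes units: "f t0 \<in> sunits S \<or> f t1 \<in> sunits S"
    and b0: "b0 \<in> pair_starts" and b0_least: "\<And>v. v \<in> pair_starts \<Longrightarrow> b0 \<le> v"
  shows "sum_at_most_irreducibles S 2 f"
proof -
  define b1 where "b1 = b0 + \<delta>"
  have "threshold < b0" "b0 \<in> supp f" "b1 \<in> supp f"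
    using b0 unfolding pair_starts_def b1_def by auto
  then have "t1 \<le> b0"
    using supp_cases threshold_le_t1 t0_less_t1 unfolding threshold_def by (force split: if_splits)
  have "b0 < b1" "b1 - b0 = \<delta>"
    using t0_less_t1 unfolding b1_def by simp_all
  have t1_nonunit: "f t1 \<notin> sunits S" if "b0 = t1"
    using \<open>threshold < b0\<close> that unfolding threshold_def by auto
  obtain aB rA where aB: "aB \<in> sunits S" "rA \<in> S" "f b0 = aB + rA" "f b0 \<notin> sunits S \<Longrightarrow> rA \<noteq> 0"
    using unit_summand_exists[OF furstenberg atoms_eq_units coeff_mem] \<open>b0 \<in> supp f\<close>
    unfolding supp_def by blast
  obtain P where base: "\<And>v. b0 \<le> v \<Longrightarrow> v < b1 \<Longrightarrow> P v"
    and step: "\<And>v. b0 \<le> v \<Longrightarrow> P (v + \<delta>) \<longleftrightarrow> \<not> P v"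
    using exists_alternating_parity[OF wellordered \<open>b0 < b1\<close>] unfolding \<open>b1 - b0 = \<delta>\<close> by blast
  \<comment> \<open>below \<open>b1\<close> there is no forbidden pair, so \<open>A\<close> keeps \<open>f\<close> there; \<open>B\<close> starts afresh at \<open>b0, b1\<close>\<close>
  define A where "A = (\<lambda>v. if v < b1 \<or> (b1 < v \<and> P v) then f v else 0)(b0 := rA)"
  define B where "B = (\<lambda>v. if v = b1 \<or> (b1 < v \<and> \<not> P v) then f v else 0)(b0 := aB)"
  have "f v = A v + B v" for v
    using aB(3) unfolding A_def B_def by (auto simp: add.commute)
  then have sum: "f = (\<lambda>v. A v + B v)" ..
  have A_supp: "supp A \<subseteq> supp f" and B_supp: "supp B \<subseteq> supp f"
    using \<open>b0 \<in> supp f\<close> unfolding A_def B_def supp_def by auto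
  have A_coeffs: "A v \<in> S" and B_coeffs: "B v \<in> S" for v
    using aB sunits_memD coeff_mem zero_mem unfolding A_def B_def by auto
  have "series_irreducible S A"
  proof (rule series_irreducible_below_pair_start[where P = P, OF units b0 b0_least step])
    show "A \<in> series S"
      using A_coeffs A_supp by (rule series_of_supp_subset[OF series])
    show "supp A \<subseteq> supp f"
      by (rule A_supp)
    show "t1 \<in> supp A"
      using t1_mem t1_nonunit aB(4) \<open>t1 \<le> b0\<close> \<open>b0 < b1\<close> unfolding A_def supp_def by auto
    show "A v = f v" if "v < b0" for v
      using that \<open>b0 < b1\<close> unfolding A_def by auto
    show "P v" if "v \<in> supp A" "b0 \<le> v" for v
      using that base \<open>b0 < b1\<close> unfolding A_def supp_def by (auto split: if_splits)
  qed
  moreover have "series_irreducible S B"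
  proof (rule series_irreducible_alternating[where P = P and e = False and u = b0,
        OF wellordered units_subset_atoms _ _ _ base])
    show "B \<in> series S"
      using B_coeffs B_supp by (rule series_of_supp_subset[OF series])
    show "B b0 \<in> sunits S" "two_least (supp B) b0 b1"
      using aB \<open>b1 \<in> supp f\<close> \<open>b0 < b1\<close> sunits_memD unfolding B_def two_least_def supp_def
      by auto
    show "P (v + (b1 - b0)) \<longleftrightarrow> \<not> P v" if "b0 \<le> v" for v
      unfolding \<open>b1 - b0 = \<delta>\<close> using that by (rule step)
    show "\<And>v. v \<in> supp B \<Longrightarrow> b1 < v \<Longrightarrow> P v = False"
      using \<open>b0 < b1\<close> unfolding B_def supp_def by (auto split: if_splits)
    show "False \<Longrightarrow> B b1 \<in> sunits S"
      by simp
  qed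
  ultimately show ?thesis
    unfolding sum by (rule sum_at_most_irreducibles_pair)
qed

lemma sum_at_most_two_irreducibles: "sum_at_most_irreducibles S 2 f"
proof (cases "f t0 \<in> sunits S \<or> f t1 \<in> sunits S")
  case units: True
  show ?thesis
  proof (cases "pair_starts = {}")
    case True
    then show ?thesis
      using series_irreducible_if_no_pair_starts[OF units] sum_at_most_irreducibles_single
        sum_at_most_irreducibles_mono by fastforce
  next
    case False
    moreover have "bdd_below pair_starts"
      using series_supp_bdd_below[OF series] unfolding pair_starts_def
      by (rule bdd_below_mono) blast
    ultimately obtain b0 where "b0 \<in> pair_starts" "\<forall>v\<in>pair_starts. b0 \<le> v"
      using bdd_below_wellorderedD[OF wellordered] by blast
    then show ?thesis
      using sum_two_irreducibles_split_at_pair_start[OF units] by blast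
  qed
next
  case False
  then show ?thesis
    using sum_two_irreducibles_if_least_coeffs_nonunits by blast
qed

end

lemma (in reduced_semidomain) sum_at_most_two_irreducibles_if_add_atoms_eq_sunits:
  fixes f :: "'g::linordered_ab_group_add \<Rightarrow> 'r"
  assumes wo: "bdd_below_wellordered TYPE('g)" and "additively_furstenberg S"
    and "add_atoms S = sunits S" and f: "f \<in> series S" and "supp_gt_one f"
  shows "sum_at_most_irreducibles S 2 f"
proof -
  obtain t0 t1 where "two_least (supp f) t0 t1"
    using exists_two_least[OF wo series_supp_bdd_below[OF f]] \<open>supp_gt_one f\<close>
    unfolding supp_gt_one_def by blast
  then interpret series_least_exponents S f t0 t1
    using assms by unfold_locales
  show ?thesis
    by (rule sum_at_most_two_irreducibles)
qed

theorem theorem4p6: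
  fixes S :: "'r::idom set"
  assumes "semidomain S"
    and "additively_reduced S"
    and "additively_furstenberg S"
    and "\<forall>A::'g::linordered_ab_group_add set. bdd_below A \<longrightarrow>
           (\<forall>B\<subseteq>A. B \<noteq> {} \<longrightarrow> (\<exists>m\<in>B. \<forall>x\<in>B. m \<le> x))"
    and "\<exists>g::'g. g \<noteq> 0"
  shows "(add_atoms S = sunits S \<longleftrightarrow>
            (\<forall>f::'g \<Rightarrow> 'r. f \<in> series S \<and> supp_gt_one f \<longrightarrow> sum_at_most_irreducibles S 3 f))
       \<and> ((\<forall>f::'g \<Rightarrow> 'r. f \<in> series S \<and> supp_gt_one f \<longrightarrow> sum_at_most_irreducibles S 3 f)
            \<longleftrightarrow> (\<exists>n::nat. n > 2 \<and>
                  (\<forall>f::'g \<Rightarrow> 'r. f \<in> series S \<and> supp_gt_one f \<longrightarrow> sum_at_most_irreducibles S n f)))"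
proof -
  interpret reduced_semidomain S
    using assms(1,2) by unfold_locales
  have wo: "bdd_below_wellordered TYPE('g)"
    unfolding bdd_below_wellordered_def using assms(4) by blast
  let ?sums = "\<lambda>n. \<forall>f::'g \<Rightarrow> 'r. f \<in> series S \<and> supp_gt_one f \<longrightarrow> sum_at_most_irreducibles S n f"
  have atoms_imp_sums: "add_atoms S = sunits S \<Longrightarrow> ?sums 3"
    using sum_at_most_two_irreducibles_if_add_atoms_eq_sunits[OF wo assms(3)]
      sum_at_most_irreducibles_mono[of S 2 _ 3] by auto
  moreover have sums_imp_atoms: "?sums n \<Longrightarrow> n > 2 \<Longrightarrow> add_atoms S = sunits S" for n
    using add_atoms_eq_sunits_if_bounded_irreducible_sums[OF wo assms(5,3), of n] by simp
  moreover have "2 < (3::nat)"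
    by simp
  ultimately show ?thesis
    by blast
qed

end
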